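(* Let $1\le l\le k-1$ and $3\le t_1\le\cdots\le t_k$. Then $$S^{(k-l+1)}(t_{l+1},\dots,t_k)\le(\log2)^{-l}S^{(k+1)}(t_1,\dots,t_k)$$ and $S^{(k+1)}(t_1,\dots,t_k)\gg_k\log t_k$.
   Context: For $m\ge1$ and $1\le s_1\le\cdots\le s_m$, with $s_0=1$, let $\mathscr{P}_*^m(\mathbf{s})=\{\mathbf{a}\in\mathbb{N}^m: a_i\in\mathscr{P}_*(s_{i-1},s_i)\ (1\le i\le m)\}$, where $\mathscr{P}_*(y,z)$ is the set of squarefree positive integers with all prime factors in $(y,z]$. $L^{(m+1)}(\mathbf{a})$ is the $m$-dimensional Lebesgue measure of $\bigcup[\log(d_1/2),\log d_1)\times\cdots\times[\log(d_m/2),\log d_m)$ over all $(d_1,\dots,d_m)\in\mathbb{N}^m$ with $d_1\cdots d_i\mid a_1\cdots a_i$ for all $1\le i\le m$. $S^{(m+1)}(\mathbf{s})=\sum_{\mathbf{a}\in\mathscr{P}_*^m(\mathbf{s})}L^{(m+1)}(\mathbf{a})/(a_1\cdots a_m)$. *)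

theory Defs
  imports "HOL-Analysis.Analysis" "HOL-Computational_Algebra.Computational_Algebra"
begin

definition Pstar :: "real \<Rightarrow> real \<Rightarrow> nat set" where
  "Pstar y z = {n. n > 0 \<and> squarefree n \<and> (\<forall>p \<in> prime_factors n. y < real p \<and> real p \<le> z)}"

text \<open>P_*^m(s) for s = [s_1,...,s_m], with the convention s_0 = 1
  (so s_{i-1} is (1 # s) ! i for 0-based i).\<close>
definition Pstar_vec :: "real list \<Rightarrow> nat list set" where
  "Pstar_vec s = {a. length a = length s \<and>
     (\<forall>i<length s. a ! i \<in> Pstar ((1 # s) ! i) (s ! i))}"

definition Lbox :: "nat list \<Rightarrow> (nat \<Rightarrow> real) set" where
  "Lbox d = PiE {..<length d} (\<lambda>i. {ln (real (d ! i) / 2)..<ln (real (d ! i))})"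

definition adm_d :: "nat list \<Rightarrow> nat list set" where
  "adm_d a = {d. length d = length a \<and> (\<forall>i<length d. d ! i > 0) \<and>
     (\<forall>i<length a. prod_list (take (Suc i) d) dvd prod_list (take (Suc i) a))}"

definition Lmeas :: "nat list \<Rightarrow> real" where
  "Lmeas a = measure (PiM {..<length a} (\<lambda>_. lborel)) (\<Union>d \<in> adm_d a. Lbox d)"

text \<open>S^{(m+1)}(s), m = length s (the index set P_*^m(s) is finite).\<close>
definition Ssum :: "real list \<Rightarrow> real" where
  "Ssum s = (\<Sum>a \<in> Pstar_vec s. Lmeas a / real (prod_list a))"

end

theory Submission
  imports Defs "HOL-Analysis.Harmonic_Numbers"
begin

(*
  Splitting the first entry a_1 in P_*(1, t_2) of a vector counted in S(t_2, ..., t_k) as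
  a_0 a_1' with a_0 in P_*(1, t_1) and a_1' in P_*(t_1, t_2) maps the vectors counted in
  S(t_1, ..., t_k) onto those counted in S(t_2, ..., t_k), preserving the product of the entries.
  Taking d_0 = 1, every admissible box for (a_0 a_1', a_2, ...) yields an admissible box for
  (a_0, a_1', a_2, ...) with first side [-log 2, 0), so L of the longer vector is at least
  log 2 times L of the shorter one, and S loses at most a factor log 2 per dropped coordinate.

  Dropping all but the last coordinate gives S(t_k) >= log 2 * sum 1/n over n in P_*(1, t_k).
  Since every n <= x is uniquely m q^2 with m squarefree,
  log x <= sum_{n <= x} 1/n <= (sum_q 1/q^2) (sum_m 1/m) <= 2 sum_m 1/m.
*)

section \<open>Splitting off the first coordinate of a product measure\<close>

lemma measurable_PiM_tail:
  "(\<lambda>x. \<lambda>j\<in>{..<m}. x (Suc j)) \<in> measurable (PiM {1..<Suc m} (\<lambda>_. M)) (PiM {..<m} (\<lambda>_. M))"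
  by (rule measurable_restrict) auto

lemma distr_PiM_tail:
  assumes "sigma_finite_measure M"
  shows "distr (PiM {1..<Suc m} (\<lambda>_. M)) (PiM {..<m} (\<lambda>_. M)) (\<lambda>x. \<lambda>j\<in>{..<m}. x (Suc j))
         = PiM {..<m} (\<lambda>_. M)"
proof -
  interpret product_sigma_finite "\<lambda>_. M"
    using assms by (simp add: product_sigma_finite_def)
  show ?thesis
  proof (rule PiM_eqI)
    fix A assume A: "\<And>i. i \<in> {..<m} \<Longrightarrow> A i \<in> sets M"
    have "(\<lambda>x. \<lambda>j\<in>{..<m}. x (Suc j)) -` PiE {..<m} A \<inter> space (PiM {1..<Suc m} (\<lambda>_. M))
          = PiE {1..<Suc m} (\<lambda>i. A (i - 1))"
      using A[THEN sets.sets_into_space]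
      by (auto simp: space_PiM PiE_iff extensional_def less_Suc_eq_0_disj Ball_def; force)
    then have "emeasure (distr (PiM {1..<Suc m} (\<lambda>_. M)) (PiM {..<m} (\<lambda>_. M))
                 (\<lambda>x. \<lambda>j\<in>{..<m}. x (Suc j))) (PiE {..<m} A)
          = emeasure (PiM {1..<Suc m} (\<lambda>_. M)) (PiE {1..<Suc m} (\<lambda>i. A (i - 1)))"
      using A by (subst emeasure_distr) (auto intro!: sets_PiM_I_finite)
    also have "\<dots> = (\<Prod>i\<in>{1..<Suc m}. emeasure M (A (i - 1)))"
      using A by (intro emeasure_PiM) auto
    also have "\<dots> = (\<Prod>i<m. emeasure M (A i))"
      by (rule prod.reindex_bij_witness[of _ Suc "\<lambda>i. i - 1"]) auto
    finally show "emeasure (distr (PiM {1..<Suc m} (\<lambda>_. M)) (PiM {..<m} (\<lambda>_. M))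
                    (\<lambda>x. \<lambda>j\<in>{..<m}. x (Suc j))) (PiE {..<m} A) = (\<Prod>i<m. emeasure M (A i))" .
  qed auto
qed

lemma sets_PiM_Collect_head_tail:
  assumes "C \<in> sets M" "U \<in> sets (PiM {..<m} (\<lambda>_. M))"
  shows "{x \<in> space (PiM {..<Suc m} (\<lambda>_. M)). x 0 \<in> C \<and> (\<lambda>j\<in>{..<m}. x (Suc j)) \<in> U}
           \<in> sets (PiM {..<Suc m} (\<lambda>_. M))"
  using assms by measurable

lemma emeasure_PiM_Collect_head_tail:
  assumes M: "sigma_finite_measure M"
    and C: "C \<in> sets M" and U: "U \<in> sets (PiM {..<m} (\<lambda>_. M))"
  shows "emeasure (PiM {..<Suc m} (\<lambda>_. M))
           {x \<in> space (PiM {..<Suc m} (\<lambda>_. M)). x 0 \<in> C \<and> (\<lambda>j\<in>{..<m}. x (Suc j)) \<in> U}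
         = emeasure M C * emeasure (PiM {..<m} (\<lambda>_. M)) U"
proof -
  interpret product_sigma_finite "\<lambda>_. M"
    using M by (simp add: product_sigma_finite_def)
  let ?tail = "\<lambda>x. \<lambda>j\<in>{..<m}. x (Suc j)"
  let ?N = "PiM {1..<Suc m} (\<lambda>_. M)"
  define S where "S = {x \<in> space (PiM {..<Suc m} (\<lambda>_. M)). x 0 \<in> C \<and> ?tail x \<in> U}"
  have S: "S \<in> sets (PiM {..<Suc m} (\<lambda>_. M))"
    unfolding S_def using C U by (rule sets_PiM_Collect_head_tail)
  have insert: "{..<Suc m} = insert 0 {1..<Suc m}"
    by auto
  have "emeasure (PiM {..<Suc m} (\<lambda>_. M)) S
      = (\<integral>\<^sup>+ x. indicator S x \<partial>PiM (insert 0 {1..<Suc m}) (\<lambda>_. M))"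
    using S insert by (simp only: nn_integral_indicator)
  also have "\<dots> = (\<integral>\<^sup>+ x. (\<integral>\<^sup>+ y. indicator S (x(0 := y)) \<partial>M) \<partial>?N)"
    using S insert by (intro product_nn_integral_insert) auto
  also have "\<dots> = (\<integral>\<^sup>+ x. emeasure M C * indicator U (?tail x) \<partial>?N)"
  proof (rule nn_integral_cong)
    fix x assume x: "x \<in> space ?N"
    have "indicator S (x(0 := y)) = (indicator C y * indicator U (?tail x) :: ennreal)"
      if "y \<in> space M" for y
    proof -
      have "x(0 := y) \<in> space (PiM {..<Suc m} (\<lambda>_. M))"
        using x that by (auto simp: space_PiM PiE_iff extensional_def)
      moreover have "?tail (x(0 := y)) = ?tail x" by auto
      ultimately show ?thesis by (auto simp: S_def indicator_def)
    qed
    then have "(\<integral>\<^sup>+ y. indicator S (x(0 := y)) \<partial>M) = (\<integral>\<^sup>+ y. indicator C y * indicator U (?tail x) \<partial>M)"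
      by (intro nn_integral_cong) simp
    also have "\<dots> = emeasure M C * indicator U (?tail x)"
      using C by (simp add: nn_integral_multc)
    finally show "(\<integral>\<^sup>+ y. indicator S (x(0 := y)) \<partial>M) = emeasure M C * indicator U (?tail x)" .
  qed
  also have "\<dots> = emeasure M C * (\<integral>\<^sup>+ x. indicator U (?tail x) \<partial>?N)"
    using U by (intro nn_integral_cmult measurable_compose[OF measurable_PiM_tail]) simp
  also have "(\<integral>\<^sup>+ x. indicator U (?tail x) \<partial>?N)
      = (\<integral>\<^sup>+ z. indicator U z \<partial>distr ?N (PiM {..<m} (\<lambda>_. M)) ?tail)"
    using U by (intro nn_integral_distr[symmetric] measurable_PiM_tail) simp
  also have "\<dots> = emeasure (PiM {..<m} (\<lambda>_. M)) U"
    using U by (simp only: distr_PiM_tail[OF M] nn_integral_indicator)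
  finally show ?thesis unfolding S_def .
qed

section \<open>Measures of unions of admissible boxes\<close>

abbreviation adm_box_union :: "nat list \<Rightarrow> (nat \<Rightarrow> real) set" where
  "adm_box_union a \<equiv> \<Union>d\<in>adm_d a. Lbox d"

lemma sets_Lbox: "Lbox d \<in> sets (PiM {..<length d} (\<lambda>_. lborel))"
  unfolding Lbox_def by (rule sets_PiM_I_finite) auto

lemma adm_d_nth_dvd_prod_list:
  assumes "d \<in> adm_d a" "i < length d"
  shows "d ! i dvd prod_list a"
proof -
  have "d ! i dvd prod_list (take (Suc i) d)"
    using assms(2) by (intro prod_list_dvd) (auto simp: in_set_conv_nth)
  also have "\<dots> dvd prod_list (take (Suc i) a)"
    using assms unfolding adm_d_def by auto
  also have "\<dots> dvd prod_list a"
    by (metis append_take_drop_id dvd_triv_left prod_list.append)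
  finally show ?thesis .
qed

lemma fmeasurable_adm_box_union:
  assumes "0 \<notin> set a"
  shows "adm_box_union a \<in> fmeasurable (PiM {..<length a} (\<lambda>_. lborel))"
proof -
  interpret product_sigma_finite "\<lambda>_. lborel :: real measure" by standard
  define P where "P = prod_list a"
  have "P > 0" using assms unfolding P_def by (induction a) auto
  define B where "B = PiE {..<length a} (\<lambda>_. {- ln 2 .. ln (real P)})"
  have "emeasure (PiM {..<length a} (\<lambda>_. lborel)) B
      = (\<Prod>i<length a. emeasure lborel {- ln 2 .. ln (real P)})"
    unfolding B_def by (rule emeasure_PiM) auto
  also have "\<dots> < top"
    by (simp add: emeasure_lborel_Icc_eq power_less_top_ennreal)
  finally have B: "B \<in> fmeasurable (PiM {..<length a} (\<lambda>_. lborel))"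
    by (intro fmeasurableI) (auto simp: B_def intro!: sets_PiM_I_finite)
  show ?thesis
  proof (rule fmeasurable_UN[OF _ _ _ B])
    fix d assume d: "d \<in> adm_d a"
    then have len: "length d = length a" by (simp add: adm_d_def)
    then show "Lbox d \<in> sets (PiM {..<length a} (\<lambda>_. lborel))"
      using sets_Lbox[of d] by simp
    show "Lbox d \<subseteq> B"
      unfolding Lbox_def B_def len
    proof (rule PiE_mono)
      fix i assume "i \<in> {..<length a}"
      then have "0 < d ! i" "d ! i \<le> P"
        using d len adm_d_nth_dvd_prod_list[OF d] \<open>P > 0\<close>
        by (auto simp: adm_d_def P_def intro: dvd_imp_le)
      then have "0 \<le> ln (real (d ! i))" "ln (real (d ! i)) \<le> ln (real P)"
        and "ln (real (d ! i) / 2) = ln (real (d ! i)) - ln 2"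
        by (auto simp: ln_div)
      then show "{ln (real (d ! i) / 2)..<ln (real (d ! i))} \<subseteq> {- ln 2..ln (real P)}"
        by (smt (verit) atLeastAtMost_iff atLeastLessThan_iff subsetI)
    qed
  qed simp
qed

lemma Lmeas_Nil: "Lmeas [] = 1"
proof -
  have "adm_box_union [] = {\<lambda>_. undefined}"
    by (auto simp: adm_d_def Lbox_def)
  then show ?thesis
    by (simp add: Lmeas_def measure_def)
qed

lemma Lbox_Cons_one:
  assumes "x \<in> space (PiM {..<Suc (length e)} (\<lambda>_. lborel))" "x 0 \<in> {- ln 2..<0}"
    and "(\<lambda>j\<in>{..<length e}. x (Suc j)) \<in> Lbox e"
  shows "x \<in> Lbox (1 # e)"
proof -
  have "ln (1 / 2) = - ln (2::real)" by (simp add: ln_div)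
  then show ?thesis
    using assms unfolding Lbox_def
    by (auto simp: PiE_iff space_PiM extensional_def less_Suc_eq_0_disj)
qed

lemma ln2_mult_Lmeas_le_Lmeas_Cons:
  assumes pos: "0 \<notin> set (a0 # a)" "0 \<notin> set b" and len: "length b = length a"
    and adm: "\<And>e. e \<in> adm_d b \<Longrightarrow> 1 # e \<in> adm_d (a0 # a)"
  shows "ln 2 * Lmeas b \<le> Lmeas (a0 # a)"
proof -
  let ?M = "PiM {..<Suc (length a)} (\<lambda>_. lborel :: real measure)"
  let ?N = "PiM {..<length a} (\<lambda>_. lborel :: real measure)"
  define S where "S = {x \<in> space ?M. x 0 \<in> {- ln 2..<0} \<and>
                          (\<lambda>j\<in>{..<length a}. x (Suc j)) \<in> adm_box_union b}"
  have Ub: "adm_box_union b \<in> fmeasurable ?N"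
    using fmeasurable_adm_box_union[OF pos(2)] len by simp
  have Ua: "adm_box_union (a0 # a) \<in> fmeasurable ?M"
    using fmeasurable_adm_box_union[OF pos(1)] by simp
  have "S \<subseteq> adm_box_union (a0 # a)"
  proof
    fix x assume "x \<in> S"
    then obtain e where e: "e \<in> adm_d b" "(\<lambda>j\<in>{..<length a}. x (Suc j)) \<in> Lbox e"
      and x: "x \<in> space ?M" "x 0 \<in> {- ln 2..<0}"
      unfolding S_def by auto
    then have "length e = length a" using len by (simp add: adm_d_def)
    with x e have "x \<in> Lbox (1 # e)" by (intro Lbox_Cons_one) auto
    with adm[OF e(1)] show "x \<in> adm_box_union (a0 # a)" by blast
  qed
  moreover have "S \<in> sets ?M"
    unfolding S_def by (rule sets_PiM_Collect_head_tail) (use Ub in auto)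
  ultimately have "measure ?M S \<le> measure ?M (adm_box_union (a0 # a))"
    using Ua by (rule measure_mono_fmeasurable)
  then have le: "measure ?M S \<le> Lmeas (a0 # a)"
    by (simp add: Lmeas_def)
  have "emeasure ?M S = emeasure lborel {- ln 2..<0::real} * emeasure ?N (adm_box_union b)"
    unfolding S_def
    by (rule emeasure_PiM_Collect_head_tail) (use Ub sigma_finite_lborel in auto)
  also have "\<dots> = ennreal (ln 2) * ennreal (measure ?N (adm_box_union b))"
    using Ub by (simp add: emeasure_eq_measure2)
  finally have "measure ?M S = ln 2 * Lmeas b"
    using len by (simp add: Lmeas_def measure_def enn2real_mult)
  with le show ?thesis
    by simp
qed

lemma adm_d_Cons_one:
  assumes e: "e \<in> adm_d ((a0 * a1) # r)"
  shows "1 # e \<in> adm_d (a0 # a1 # r)"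
  unfolding adm_d_def
proof (intro CollectI conjI allI impI)
  show "length (1 # e) = length (a0 # a1 # r)"
    using e by (simp add: adm_d_def)
  show "0 < (1 # e) ! i" if "i < length (1 # e)" for i
    using e that by (cases i) (auto simp: adm_d_def)
  show "prod_list (take (Suc i) (1 # e)) dvd prod_list (take (Suc i) (a0 # a1 # r))"
    if "i < length (a0 # a1 # r)" for i
  proof (cases i)
    case (Suc j)
    then have "prod_list (take (Suc j) e) dvd prod_list (take (Suc j) ((a0 * a1) # r))"
      using e that unfolding adm_d_def by auto
    with Suc show ?thesis by (simp add: mult.assoc)
  qed simp
qed

lemma Lmeas_merge:
  assumes "0 \<notin> set (a0 # a1 # r)"
  shows "ln 2 * Lmeas ((a0 * a1) # r) \<le> Lmeas (a0 # a1 # r)"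
  by (rule ln2_mult_Lmeas_le_Lmeas_Cons[OF assms _ _ adm_d_Cons_one]) (use assms in auto)

lemma ln2_le_Lmeas_singleton:
  assumes "n > 0"
  shows "ln 2 \<le> Lmeas [n]"
proof -
  have "[1] \<in> adm_d [n]"
    by (simp add: adm_d_def)
  then have "ln 2 * Lmeas [] \<le> Lmeas [n]"
    using assms by (intro ln2_mult_Lmeas_le_Lmeas_Cons) (auto simp: adm_d_def)
  then show ?thesis by (simp add: Lmeas_Nil)
qed

section \<open>Squarefree numbers with prime factors in an interval\<close>

lemma prod_prime_factors_squarefree:
  fixes n :: nat
  assumes "n > 0" "squarefree n"
  shows "\<Prod>(prime_factors n) = n"
proof -
  have "\<And>p. p \<in> prime_factors n \<Longrightarrow> multiplicity p n = 1"
    using assms squarefree_factorial_semiring'[of n] by auto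
  then have "\<Prod>(prime_factors n) = (\<Prod>p\<in>prime_factors n. p ^ multiplicity p n)"
    by simp
  also have "\<dots> = n"
    using assms by (simp add: prod_prime_factors)
  finally show ?thesis .
qed

lemma prod_primes_in_Pstar:
  assumes "finite P" and P: "\<And>p. p \<in> P \<Longrightarrow> prime p \<and> x < real p \<and> real p \<le> y"
  shows "\<Prod>P \<in> Pstar x y"
proof -
  have "0 \<notin> P"
    using P by fastforce
  then have "prime_factors (\<Prod>P) = P"
    using assms by (subst prime_factors_prod) (auto simp: prime_prime_factors)
  moreover have "squarefree (\<Prod>P)"
    using assms by (intro squarefree_prod_coprime) (auto intro: primes_coprime squarefree_prime)
  moreover have "\<Prod>P > 0"
    using P by (intro prod_pos) (simp add: prime_gt_0_nat)
  ultimately show ?thesis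
    using P by (auto simp: Pstar_def)
qed

lemma Pstar_split:
  assumes "n \<in> Pstar x z"
  obtains u v where "u \<in> Pstar x y" "v \<in> Pstar y z" "n = u * v"
proof
  let ?A = "{p \<in> prime_factors n. real p \<le> y}" and ?B = "{p \<in> prime_factors n. y < real p}"
  show "\<Prod>?A \<in> Pstar x y" "\<Prod>?B \<in> Pstar y z"
    by (intro prod_primes_in_Pstar; use assms in \<open>auto simp: Pstar_def\<close>)+
  have "\<Prod>?A * \<Prod>?B = \<Prod>(?A \<union> ?B)"
    by (rule prod.union_disjoint[symmetric]) auto
  also have "?A \<union> ?B = prime_factors n" by auto
  also have "\<Prod>(prime_factors n) = n"
    using assms by (simp add: Pstar_def prod_prime_factors_squarefree)
  finally show "n = \<Prod>?A * \<Prod>?B" ..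
qed

lemma finite_Pstar: "finite (Pstar y z)"
proof (rule finite_subset)
  show "Pstar y z \<subseteq> Prod ` Pow {..nat \<lfloor>z\<rfloor>}"
  proof
    fix n assume n: "n \<in> Pstar y z"
    then have "n = \<Prod>(prime_factors n)"
      by (simp add: Pstar_def prod_prime_factors_squarefree)
    moreover have "prime_factors n \<subseteq> {..nat \<lfloor>z\<rfloor>}"
      using n by (auto simp: Pstar_def le_nat_floor)
    ultimately show "n \<in> Prod ` Pow {..nat \<lfloor>z\<rfloor>}" by blast
  qed
qed simp

fun Pstar_vec_from :: "real \<Rightarrow> real list \<Rightarrow> nat list set" where
  "Pstar_vec_from y [] = {[]}"
| "Pstar_vec_from y (z # s) = {x # a |x a. x \<in> Pstar y z \<and> a \<in> Pstar_vec_from z s}"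

lemma Pstar_vec_from_eq:
  "Pstar_vec_from y s = {a. length a = length s \<and> (\<forall>i<length s. a ! i \<in> Pstar ((y # s) ! i) (s ! i))}"
    (is "_ = ?R y s")
proof (induction s arbitrary: y)
  case (Cons z s)
  show ?case
  proof (intro set_eqI iffI)
    fix a assume "a \<in> Pstar_vec_from y (z # s)"
    then show "a \<in> ?R y (z # s)"
      using Cons by (auto simp: less_Suc_eq_0_disj)
  next
    fix a assume a: "a \<in> ?R y (z # s)"
    then obtain x a' where "a = x # a'"
      by (cases a) auto
    with a show "a \<in> Pstar_vec_from y (z # s)"
      using Cons by fastforce
  qed
qed simp

lemma Pstar_vec_eq_from: "Pstar_vec s = Pstar_vec_from 1 s"
  by (simp add: Pstar_vec_def Pstar_vec_from_eq)

lemma finite_Pstar_vec_from: "finite (Pstar_vec_from y s)"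
  by (induction s arbitrary: y) (auto intro!: finite_image_set2 simp: finite_Pstar)

lemma Pstar_vec_from_nonzero: "a \<in> Pstar_vec_from y s \<Longrightarrow> 0 \<notin> set a"
  by (induction s arbitrary: y a) (auto simp: Pstar_def)

section \<open>Dropping coordinates of \<open>S\<close>\<close>

fun merge_head :: "nat list \<Rightarrow> nat list" where
  "merge_head (x # y # a) = (x * y) # a"
| "merge_head a = a"

lemma Pstar_vec_from_merge_head_surj:
  assumes "b \<in> Pstar_vec_from y (s1 # r)"
  shows "b \<in> merge_head ` Pstar_vec_from y (s0 # s1 # r)"
proof -
  obtain x b' where b: "b = x # b'" "x \<in> Pstar y s1" "b' \<in> Pstar_vec_from s1 r"
    using assms by auto
  then obtain u v where "u \<in> Pstar y s0" "v \<in> Pstar s0 s1" "x = u * v"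
    by (meson Pstar_split)
  with b have "u # v # b' \<in> Pstar_vec_from y (s0 # s1 # r)" "b = merge_head (u # v # b')"
    by auto
  then show ?thesis by blast
qed

lemma ln2_mult_Ssum_le_Ssum_Cons: "ln 2 * Ssum (s1 # r) \<le> Ssum (s0 # s1 # r)"
proof -
  let ?P = "Pstar_vec_from 1 (s0 # s1 # r)"
  let ?h = "\<lambda>b. Lmeas b / real (prod_list b)"
  have h_nonneg: "?h b \<ge> 0" for b
    by (simp add: Lmeas_def)
  have h_merge: "ln 2 * ?h (merge_head a) \<le> ?h a" if a: "a \<in> ?P" for a
  proof -
    obtain x y a' where a_eq: "a = x # y # a'"
      using a by fastforce
    have "ln 2 * Lmeas (merge_head a) \<le> Lmeas a"
      using a_eq Lmeas_merge Pstar_vec_from_nonzero[OF a] by simp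
    then show ?thesis
      using a_eq by (simp add: divide_right_mono mult.assoc)
  qed
  have "Ssum (s1 # r) = sum ?h (Pstar_vec_from 1 (s1 # r))"
    by (simp add: Ssum_def Pstar_vec_eq_from)
  also have "\<dots> \<le> sum ?h (merge_head ` ?P)"
    by (intro sum_mono2 finite_imageI finite_Pstar_vec_from subsetI Pstar_vec_from_merge_head_surj h_nonneg)
  also have "\<dots> \<le> sum (?h \<circ> merge_head) ?P"
    by (intro sum_image_le finite_Pstar_vec_from h_nonneg)
  finally have "Ssum (s1 # r) \<le> (\<Sum>a\<in>?P. ?h (merge_head a))"
    by (simp only: comp_def)
  then have "ln 2 * Ssum (s1 # r) \<le> (\<Sum>a\<in>?P. ln 2 * ?h (merge_head a))"
    unfolding sum_distrib_left[symmetric] by (rule mult_left_mono) simp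
  also have "\<dots> \<le> sum ?h ?P"
    using h_merge by (rule sum_mono)
  also have "\<dots> = Ssum (s0 # s1 # r)"
    by (simp add: Ssum_def Pstar_vec_eq_from)
  finally show ?thesis .
qed

lemma ln2_pow_mult_Ssum_drop_le:
  "l < length t \<Longrightarrow> ln 2 ^ l * Ssum (drop l t) \<le> Ssum t"
proof (induction l)
  case (Suc l)
  have "drop l t = t ! l # drop (Suc l) t" "drop (Suc l) t = t ! Suc l # drop (Suc (Suc l)) t"
    using Suc.prems by (simp_all add: Cons_nth_drop_Suc)
  then have "ln 2 * Ssum (drop (Suc l) t) \<le> Ssum (drop l t)"
    by (simp only:) (rule ln2_mult_Ssum_le_Ssum_Cons)
  then have "ln 2 ^ Suc l * Ssum (drop (Suc l) t) \<le> ln 2 ^ l * Ssum (drop l t)"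
    by (simp add: mult.assoc mult_left_mono)
  also have "\<dots> \<le> Ssum t"
    using Suc by simp
  finally show ?case .
qed simp

lemma sum_inverse_squares_le_two_minus:
  "N \<ge> 1 \<Longrightarrow> (\<Sum>q=1..N. 1 / real q ^ 2) \<le> 2 - 1 / real N"
proof (induction N rule: nat_induct_at_least)
  case (Suc n)
  have "1 / real (Suc n) ^ 2 \<le> 1 / real n - 1 / real (Suc n)"
    using Suc.hyps by (simp add: divide_simps power2_eq_square)
  with Suc.IH show ?case by simp
qed simp

lemma sum_inverse_squares_le_two: "(\<Sum>q=1..N. 1 / real q ^ 2) \<le> 2"
  using sum_inverse_squares_le_two_minus[of N]
  by (cases "N = 0") (auto intro: order_trans[of _ "2 - 1 / real N"])

lemma squarefree_part_in_Pstar: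
  assumes "0 < k" "real k \<le> x"
  shows "squarefree_part k \<in> Pstar 1 x"
  unfolding Pstar_def
proof (intro CollectI conjI ballI)
  show "squarefree_part k > 0"
    using squarefree_part_nonzero[of k] by linarith
  show "squarefree (squarefree_part k)"
    by simp
  fix p assume p: "p \<in> prime_factors (squarefree_part k)"
  then show "1 < real p"
    using prime_gt_1_nat by auto
  have "squarefree_part k dvd k"
    by (subst (2) squarefree_decompose) simp
  then have "p dvd k"
    using p by (auto intro: dvd_trans)
  then have "p \<le> k"
    using assms(1) by (rule dvd_imp_le)
  then show "real p \<le> x"
    using assms(2) by linarith
qed

lemma ln_le_two_sum_inverse_Pstar:
  assumes "1 \<le> x"
  shows "ln x \<le> 2 * (\<Sum>n\<in>Pstar 1 x. 1 / real n)"
proof -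
  define N where "N = nat \<lfloor>x\<rfloor>"
  have N: "real N \<le> x" "x < real N + 1"
    using assms unfolding N_def by linarith+
  let ?f = "\<lambda>k::nat. (squarefree_part k, square_part k)"
  let ?w = "\<lambda>(m, q). 1 / real m * (1 / real q ^ 2)"
  have decomp: "real k = real (squarefree_part k) * real (square_part k) ^ 2" for k
    by (subst squarefree_decompose) simp
  have inj: "inj_on ?f {1..N}"
  proof (rule inj_onI)
    fix k1 k2 assume "?f k1 = ?f k2"
    then show "k1 = k2"
      using squarefree_decompose[of k1] squarefree_decompose[of k2] by simp
  qed
  have f_into: "?f ` {1..N} \<subseteq> Pstar 1 x \<times> {1..N}"
  proof (rule image_subsetI)
    fix k assume k: "k \<in> {1..N}"
    have "square_part k > 0"
      using k by (metis atLeastAtMost_iff gr0I not_one_le_zero square_part_0_iff)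
    moreover have "square_part k ^ 2 dvd k"
      by (subst (2) squarefree_decompose) simp
    then have "square_part k ^ 2 \<le> k"
      using k by (intro dvd_imp_le) auto
    then have "square_part k \<le> k"
      by (rule power2_nat_le_imp_le)
    ultimately show "?f k \<in> Pstar 1 x \<times> {1..N}"
      using k N by (auto intro!: squarefree_part_in_Pstar)
  qed
  have "ln x \<le> ln (real N + 1)"
    using assms N by simp
  also have "\<dots> \<le> harm N"
    by (rule ln_le_harm)
  also have "\<dots> = (\<Sum>k\<in>{1..N}. ?w (?f k))"
    unfolding harm_def by (intro sum.cong refl) (subst decomp, simp add: divide_inverse)
  also have "\<dots> = sum ?w (?f ` {1..N})"
    by (simp only: sum.reindex[OF inj] comp_def)
  also have "\<dots> \<le> sum ?w (Pstar 1 x \<times> {1..N})"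
    by (intro sum_mono2 f_into finite_cartesian_product finite_Pstar finite_atLeastAtMost)
      (auto simp: case_prod_beta)
  also have "\<dots> = (\<Sum>m\<in>Pstar 1 x. \<Sum>q=1..N. 1 / real m * (1 / real q ^ 2))"
    by (subst sum.cartesian_product) (simp add: case_prod_beta)
  also have "\<dots> = (\<Sum>m\<in>Pstar 1 x. 1 / real m) * (\<Sum>q=1..N. 1 / real q ^ 2)"
    by (simp add: sum_product)
  also have "\<dots> \<le> (\<Sum>m\<in>Pstar 1 x. 1 / real m) * 2"
    by (intro mult_left_mono sum_inverse_squares_le_two sum_nonneg) simp
  finally show ?thesis
    by linarith
qed

lemma Ssum_singleton_ge: "ln 2 * (\<Sum>n\<in>Pstar 1 x. 1 / real n) \<le> Ssum [x]"
proof -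
  have "Pstar_vec [x] = (\<lambda>n. [n]) ` Pstar 1 x"
    by (auto simp: Pstar_vec_eq_from)
  then have "Ssum [x] = (\<Sum>n\<in>Pstar 1 x. Lmeas [n] / real n)"
    by (simp add: Ssum_def sum.reindex inj_on_def)
  moreover have "ln 2 * (1 / real n) \<le> Lmeas [n] / real n" if "n \<in> Pstar 1 x" for n
    using that ln2_le_Lmeas_singleton[of n] by (simp add: Pstar_def divide_right_mono)
  ultimately show ?thesis
    by (simp add: sum_distrib_left sum_mono)
qed

lemma ln2_pow_mult_ln_last_le_Ssum:
  assumes "t \<noteq> []" "1 \<le> last t"
  shows "ln 2 ^ length t / 2 * ln (last t) \<le> Ssum t"
proof -
  obtain l where l: "length t = Suc l"
    using assms(1) by (cases t) auto
  have "ln 2 / 2 * ln (last t) = ln 2 * (ln (last t) / 2)"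
    by simp
  also have "\<dots> \<le> ln 2 * (\<Sum>n\<in>Pstar 1 (last t). 1 / real n)"
    using ln_le_two_sum_inverse_Pstar[OF assms(2)] by (intro mult_left_mono) simp_all
  also have "\<dots> \<le> Ssum [last t]"
    by (rule Ssum_singleton_ge)
  finally have last: "ln 2 / 2 * ln (last t) \<le> Ssum [last t]" .
  have "drop l t = [last t]"
    using assms(1) l by (induction t arbitrary: l rule: rev_induct) auto
  then have drop: "ln 2 ^ l * Ssum [last t] \<le> Ssum t"
    using ln2_pow_mult_Ssum_drop_le[of l t] l by simp
  have "ln 2 ^ length t / 2 * ln (last t) = ln 2 ^ l * (ln 2 / 2 * ln (last t))"
    by (simp add: l)
  also have "\<dots> \<le> ln 2 ^ l * Ssum [last t]"
    using last by (rule mult_left_mono) simp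
  also have "\<dots> \<le> Ssum t"
    by (rule drop)
  finally show ?thesis .
qed

theorem lemma3p8:
  fixes k :: nat
  assumes "k \<ge> 2"
  shows "(\<forall>l (t :: real list). 1 \<le> l \<and> l \<le> k - 1 \<and> length t = k \<and> sorted t \<and> 3 \<le> t ! 0 \<longrightarrow>
            Ssum (drop l t) \<le> inverse (ln 2 ^ l) * Ssum t)
       \<and> (\<exists>c > 0. \<forall>(t :: real list). length t = k \<and> sorted t \<and> 3 \<le> t ! 0 \<longrightarrow>
            c * ln (t ! (k - 1)) \<le> Ssum t)"
proof (intro conjI allI impI)
  fix l and t :: "real list"
  assume "1 \<le> l \<and> l \<le> k - 1 \<and> length t = k \<and> sorted t \<and> 3 \<le> t ! 0"
  then have "ln 2 ^ l * Ssum (drop l t) \<le> Ssum t"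
    using assms by (intro ln2_pow_mult_Ssum_drop_le) auto
  then show "Ssum (drop l t) \<le> inverse (ln 2 ^ l) * Ssum t"
    by (simp add: field_simps)
next
  show "\<exists>c > 0. \<forall>t :: real list. length t = k \<and> sorted t \<and> 3 \<le> t ! 0 \<longrightarrow>
          c * ln (t ! (k - 1)) \<le> Ssum t"
  proof (intro exI[of _ "ln 2 ^ k / 2"] conjI allI impI)
    fix t :: "real list"
    assume t: "length t = k \<and> sorted t \<and> 3 \<le> t ! 0"
    then have ne: "t \<noteq> []"
      using assms by auto
    then have "last t = t ! (k - 1)"
      using t by (simp add: last_conv_nth)
    moreover have "t ! 0 \<le> t ! (k - 1)"
      using t assms by (intro sorted_nth_mono) auto
    ultimately show "ln 2 ^ k / 2 * ln (t ! (k - 1)) \<le> Ssum t"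
      using ln2_pow_mult_ln_last_le_Ssum[OF ne] t by simp
  qed simp
qed

end
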